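(* Let $f,g\in C^{2}[0,1]$ be real-valued. Then for all $x\in[0,1]$ and $n\in\mathbb{N}$, $$n\left|B_{n}(fg)(x)-B_{n}(f)(x)B_{n}(g)(x)-\frac{x(1-x)}{n}f'(x)g'(x)\right|$$ $$\le\frac{x(1-x)}{2}\left[\tilde{\omega}_{1}\Big((fg)'';\frac{1}{3\sqrt{n}}\Big)+\|g\|\,\tilde{\omega}_{1}\Big(f'';\frac{1}{3\sqrt{n}}\Big)+\|f\|\,\tilde{\omega}_{1}\Big(g'';\frac{1}{3\sqrt{n}}\Big)+\frac{1}{2n}\|f''\|\,\|g''\|\right].$$
   Context: For $f:[0,1]\to\mathbb{R}$ the Bernstein polynomials are $B_{n}(f)(x)=\sum_{k=0}^{n}\binom{n}{k}x^{k}(1-x)^{n-k}f(k/n)$. $\|\cdot\|$ denotes the uniform norm on $C[0,1]$. For $h\in C[0,1]$, $\omega_{1}(h;t)=\sup\{|h(x)-h(y)|: x,y\in[0,1],|x-y|\le t\}$ is the first-order modulus of continuity, and $\tilde{\omega}_{1}(h;\cdot)$ denotes its least concave majorant. *)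

theory Defs
  imports "HOL-Analysis.Analysis"
begin

definition bernstein :: "nat \<Rightarrow> (real \<Rightarrow> real) \<Rightarrow> real \<Rightarrow> real" where
  "bernstein n f x = (\<Sum>k=0..n. real (n choose k) * x ^ k * (1 - x) ^ (n - k) * f (real k / real n))"

definition d01 :: "(real \<Rightarrow> real) \<Rightarrow> real \<Rightarrow> real" where
  "d01 h x = vector_derivative h (at x within {0..1})"

definition C2_01 :: "(real \<Rightarrow> real) \<Rightarrow> bool" where
  "C2_01 h \<longleftrightarrow>
     (\<forall>x\<in>{0..1}. h differentiable (at x within {0..1})) \<and>
     (\<forall>x\<in>{0..1}. d01 h differentiable (at x within {0..1})) \<and>
     continuous_on {0..1} (d01 (d01 h))"

definition unorm :: "(real \<Rightarrow> real) \<Rightarrow> real" where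
  "unorm h = Sup {\<bar>h x\<bar> | x. x \<in> {0..1}}"

definition omega1 :: "(real \<Rightarrow> real) \<Rightarrow> real \<Rightarrow> real" where
  "omega1 h t = Sup {\<bar>h x - h y\<bar> | x y. x \<in> {0..1} \<and> y \<in> {0..1} \<and> \<bar>x - y\<bar> \<le> t}"

definition omega1_tilde :: "(real \<Rightarrow> real) \<Rightarrow> real \<Rightarrow> real" where
  "omega1_tilde h t = Inf {\<psi> t | \<psi>. concave_on {0..} \<psi> \<and> (\<forall>s\<ge>0. omega1 h s \<le> \<psi> s)}"

end

theory Submission
  imports Defs
begin

(* Write E h = B_n h - h - x(1-x)/(2n) h'' for the Voronovskaja error of h. The quantity on the
   left is n |E (fg) - f E g - g E f - (B_n f - f)(B_n g - g)|, so it suffices to bound the four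
   terms. For a concave majorant \<psi> of \<omega>_1(h''), a supporting line of slope m \<ge> 0 at
   \<delta> = 1/(3 sqrt n) gives |h''(u) - h''(x)| \<le> \<psi>(\<delta>) - m \<delta> + m |u - x|. A second-order Taylor
   estimate, integrated against the Bernstein weights with the moments
   \<Sum> (k/n - x)^2 p_nk = x(1-x)/n and \<Sum> |k/n - x|^3 p_nk \<le> x(1-x)/n^(3/2), turns this into
   n |E h| \<le> x(1-x)/2 (\<psi>(\<delta>) - m \<delta> + m/(3 sqrt n)) = x(1-x)/2 \<psi>(\<delta>); the choice of \<delta> makes the
   slope cancel, and the infimum over \<psi> yields the least concave majorant. The same Taylor estimate
   with \<psi> replaced by \<parallel>h''\<parallel> gives |B_n h - h| \<le> x(1-x)/(2n) \<parallel>h''\<parallel> for the last term. *)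

lemma sum_binomial_Bernstein:
  "(\<Sum>k\<le>n. real (k choose j) * Bernstein n k x) = real (n choose j) * x ^ j"
proof (induction j arbitrary: n)
  case 0
  then show ?case by simp
next
  case (Suc j)
  show ?case
  proof (cases n)
    case 0
    then show ?thesis by simp
  next
    case (Suc m)
    have shift: "real (Suc j) * (real (Suc k choose Suc j) * Bernstein (Suc m) (Suc k) x)
        = real (Suc m) * x * (real (k choose j) * Bernstein m k x)" for k
    proof -
      have e1: "real (Suc j) * real (Suc k choose Suc j) = real (Suc k) * real (k choose j)"
        using Suc_times_binomial_eq[of k j] by (metis of_nat_mult mult.commute)
      have e2: "real (Suc k) * real (Suc m choose Suc k) = real (Suc m) * real (m choose k)"
        using Suc_times_binomial[of k m] by (metis of_nat_mult)
      have "real (Suc j) * (real (Suc k choose Suc j) * Bernstein (Suc m) (Suc k) x)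
          = (real (Suc j) * real (Suc k choose Suc j)) * real (Suc m choose Suc k) * x * (x ^ k * (1 - x) ^ (m - k))"
        unfolding Bernstein_def power_Suc diff_Suc_Suc by (simp only: mult_ac)
      also have "\<dots> = real (k choose j) * (real (Suc k) * real (Suc m choose Suc k)) * x * (x ^ k * (1 - x) ^ (m - k))"
        unfolding e1 by (simp only: mult_ac)
      also have "\<dots> = real (Suc m) * x * (real (k choose j) * Bernstein m k x)"
        unfolding e2 Bernstein_def by (simp only: mult_ac)
      finally show ?thesis .
    qed
    have "real (Suc j) * (\<Sum>k\<le>Suc m. real (k choose Suc j) * Bernstein (Suc m) k x)
        = (\<Sum>k\<le>m. real (Suc j) * (real (Suc k choose Suc j) * Bernstein (Suc m) (Suc k) x))"
      by (subst sum.atMost_Suc_shift) (simp add: sum_distrib_left del: binomial_Suc_Suc)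
    also have "\<dots> = real (Suc m) * x * (real (m choose j) * x ^ j)"
      by (simp only: shift sum_distrib_left[symmetric] Suc.IH)
    also have "\<dots> = real (Suc j) * (real (Suc m choose Suc j) * x ^ Suc j)"
    proof -
      have "real (Suc m) * real (m choose j) = real (Suc j) * real (Suc m choose Suc j)"
        using Suc_times_binomial_eq[of m j] by (metis of_nat_mult mult.commute)
      then show ?thesis
        by (metis mult.assoc mult.left_commute power_Suc)
    qed
    finally show ?thesis
      using Suc by (simp only: mult_left_cancel of_nat_eq_0_iff nat.distinct(2)) simp
  qed
qed

lemma sum_power_Bernstein:
  "(\<Sum>k\<le>n. real k ^ 2 * Bernstein n k x) = real n * (real n - 1) * x ^ 2 + real n * x"
  "(\<Sum>k\<le>n. real k ^ 3 * Bernstein n k x)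
     = real n * (real n - 1) * (real n - 2) * x ^ 3 + 3 * real n * (real n - 1) * x ^ 2 + real n * x"
  "(\<Sum>k\<le>n. real k ^ 4 * Bernstein n k x)
     = real n * (real n - 1) * (real n - 2) * (real n - 3) * x ^ 4
       + 6 * real n * (real n - 1) * (real n - 2) * x ^ 3 + 7 * real n * (real n - 1) * x ^ 2 + real n * x"
proof -
  have C: "real (m choose 1) = real m"
    "real (m choose 2) = real m * (real m - 1) / 2"
    "real (m choose 3) = real m * (real m - 1) * (real m - 2) / 6"
    "real (m choose 4) = real m * (real m - 1) * (real m - 2) * (real m - 3) / 24" for m
    by (simp_all add: binomial_gbinomial gbinomial_prod_rev eval_nat_numeral)
  let ?M = "\<lambda>j. (\<Sum>k\<le>n. real (k choose j) * Bernstein n k x)"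
  have P: "real k ^ 2 = 2 * real (k choose 2) + real (k choose 1)"
    "real k ^ 3 = 6 * real (k choose 3) + 6 * real (k choose 2) + real (k choose 1)"
    "real k ^ 4 = 24 * real (k choose 4) + 36 * real (k choose 3) + 14 * real (k choose 2)
       + real (k choose 1)" for k
    by (simp_all only: C) (simp_all add: field_simps power2_eq_square power3_eq_cube power4_eq_xxxx)
  have "(\<Sum>k\<le>n. real k ^ 2 * Bernstein n k x) = 2 * ?M 2 + ?M 1"
    by (simp only: P distrib_right sum.distrib mult.assoc flip: sum_distrib_left)
  also have "\<dots> = real n * (real n - 1) * x ^ 2 + real n * x"
    by (simp only: sum_binomial_Bernstein) (simp add: C)
  finally show "(\<Sum>k\<le>n. real k ^ 2 * Bernstein n k x) = real n * (real n - 1) * x ^ 2 + real n * x" .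
  have "(\<Sum>k\<le>n. real k ^ 3 * Bernstein n k x) = 6 * ?M 3 + 6 * ?M 2 + ?M 1"
    by (simp only: P distrib_right sum.distrib mult.assoc flip: sum_distrib_left)
  also have "\<dots> = real n * (real n - 1) * (real n - 2) * x ^ 3 + 3 * real n * (real n - 1) * x ^ 2 + real n * x"
    by (simp only: sum_binomial_Bernstein) (simp add: C)
  finally show "(\<Sum>k\<le>n. real k ^ 3 * Bernstein n k x)
     = real n * (real n - 1) * (real n - 2) * x ^ 3 + 3 * real n * (real n - 1) * x ^ 2 + real n * x" .
  have "(\<Sum>k\<le>n. real k ^ 4 * Bernstein n k x) = 24 * ?M 4 + 36 * ?M 3 + 14 * ?M 2 + ?M 1"
    by (simp only: P distrib_right sum.distrib mult.assoc flip: sum_distrib_left)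
  also have "\<dots> = real n * (real n - 1) * (real n - 2) * (real n - 3) * x ^ 4
       + 6 * real n * (real n - 1) * (real n - 2) * x ^ 3 + 7 * real n * (real n - 1) * x ^ 2 + real n * x"
    by (simp only: sum_binomial_Bernstein) (simp add: C)
  finally show "(\<Sum>k\<le>n. real k ^ 4 * Bernstein n k x)
     = real n * (real n - 1) * (real n - 2) * (real n - 3) * x ^ 4
       + 6 * real n * (real n - 1) * (real n - 2) * x ^ 3 + 7 * real n * (real n - 1) * x ^ 2 + real n * x" .
qed

lemma sum_central_moments_Bernstein:
  "(\<Sum>k\<le>n. (real k - real n * x) * Bernstein n k x) = 0"
  "(\<Sum>k\<le>n. (real k - real n * x) ^ 2 * Bernstein n k x) = real n * x * (1 - x)"
  "(\<Sum>k\<le>n. (real k - real n * x) ^ 4 * Bernstein n k x)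
     = real n * x * (1 - x) * (1 + 3 * (real n - 2) * x * (1 - x))"
proof -
  let ?B = "\<lambda>k. Bernstein n k x" and ?y = "real n * x"
  have "(\<Sum>k\<le>n. (real k - ?y) * ?B k) = (\<Sum>k\<le>n. real k * ?B k) - ?y * (\<Sum>k\<le>n. ?B k)"
    by (simp only: left_diff_distrib sum_subtractf sum_distrib_left mult.assoc)
  then show "(\<Sum>k\<le>n. (real k - real n * x) * Bernstein n k x) = 0"
    by simp
  have "(\<Sum>k\<le>n. (real k - ?y) ^ 2 * ?B k)
      = (\<Sum>k\<le>n. real k ^ 2 * ?B k) - 2 * ?y * (\<Sum>k\<le>n. real k * ?B k) + ?y ^ 2 * (\<Sum>k\<le>n. ?B k)"
  proof -
    have "(real k - ?y) ^ 2 * ?B k = real k ^ 2 * ?B k - 2 * ?y * (real k * ?B k) + ?y ^ 2 * ?B k" for k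
      by algebra
    then show ?thesis
      by (simp only: sum_subtractf sum.distrib sum_distrib_left)
  qed
  also have "\<dots> = real n * x * (1 - x)"
    by (simp only: sum_power_Bernstein sum_k_Bernstein sum_Bernstein) algebra
  finally show "(\<Sum>k\<le>n. (real k - real n * x) ^ 2 * Bernstein n k x) = real n * x * (1 - x)" .
  have "(\<Sum>k\<le>n. (real k - ?y) ^ 4 * ?B k)
      = (\<Sum>k\<le>n. real k ^ 4 * ?B k) - 4 * ?y * (\<Sum>k\<le>n. real k ^ 3 * ?B k)
        + 6 * ?y ^ 2 * (\<Sum>k\<le>n. real k ^ 2 * ?B k) - 4 * ?y ^ 3 * (\<Sum>k\<le>n. real k * ?B k)
        + ?y ^ 4 * (\<Sum>k\<le>n. ?B k)"
  proof -
    have "(real k - ?y) ^ 4 * ?B k = real k ^ 4 * ?B k - 4 * ?y * (real k ^ 3 * ?B k)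
        + 6 * ?y ^ 2 * (real k ^ 2 * ?B k) - 4 * ?y ^ 3 * (real k * ?B k) + ?y ^ 4 * ?B k" for k
      by algebra
    then show ?thesis
      by (simp only: sum_subtractf sum.distrib sum_distrib_left)
  qed
  also have "\<dots> = real n * x * (1 - x) * (1 + 3 * (real n - 2) * x * (1 - x))"
    by (simp only: sum_power_Bernstein sum_k_Bernstein sum_Bernstein) algebra
  finally show "(\<Sum>k\<le>n. (real k - real n * x) ^ 4 * Bernstein n k x)
     = real n * x * (1 - x) * (1 + 3 * (real n - 2) * x * (1 - x))" .
qed

lemma of_nat_divide_diff_eq:
  assumes "n > 0"
  shows "real k / real n - x = (real k - real n * x) / real n"
  using assms by (simp add: field_simps)

lemma sum_deviation_Bernstein:
  assumes "n > 0"
  shows "(\<Sum>k\<le>n. (real k / real n - x) * Bernstein n k x) = 0"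
proof -
  have "(\<Sum>k\<le>n. (real k / real n - x) * Bernstein n k x)
      = (\<Sum>k\<le>n. (real k - real n * x) * Bernstein n k x) / real n"
    by (simp only: of_nat_divide_diff_eq[OF assms] sum_divide_distrib times_divide_eq_left)
  then show ?thesis
    by (simp add: sum_central_moments_Bernstein)
qed

lemma sum_deviation_square_Bernstein:
  assumes "n > 0"
  shows "(\<Sum>k\<le>n. (real k / real n - x) ^ 2 * Bernstein n k x) = x * (1 - x) / real n"
proof -
  have "(\<Sum>k\<le>n. (real k / real n - x) ^ 2 * Bernstein n k x)
      = (\<Sum>k\<le>n. (real k - real n * x) ^ 2 * Bernstein n k x) / real n ^ 2"
    by (simp only: of_nat_divide_diff_eq[OF assms] power_divide sum_divide_distrib times_divide_eq_left)
  also have "\<dots> = x * (1 - x) / real n"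
    using assms by (simp only: sum_central_moments_Bernstein) (simp add: power2_eq_square)
  finally show ?thesis .
qed

lemma sum_deviation_power4_Bernstein_le:
  assumes "n > 0" and "0 \<le> x" "x \<le> 1"
  shows "(\<Sum>k\<le>n. (real k / real n - x) ^ 4 * Bernstein n k x) \<le> x * (1 - x) / real n ^ 2"
proof -
  define q where "q = x * (1 - x)"
  have q0: "0 \<le> q"
    using assms(2,3) unfolding q_def by simp
  have "0 \<le> (x - 1/2) ^ 2"
    by simp
  then have q1: "q \<le> 1/4"
    unfolding q_def by (simp add: power2_eq_square algebra_simps)
  have "3 * (real n - 2) * q \<le> real n - 1"
  proof (cases "n \<ge> 2")
    case True
    then have "3 * (real n - 2) * q \<le> 3 * (real n - 2) * (1/4)"
      using q1 by (intro mult_left_mono) auto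
    then show ?thesis
      by simp
  next
    case False
    then have "n = 1"
      using assms(1) by simp
    then show ?thesis
      using q0 by simp
  qed
  then have bound: "real n * q * (1 + 3 * (real n - 2) * q) \<le> real n * q * real n"
    using q0 by (intro mult_left_mono) auto
  have "(\<Sum>k\<le>n. (real k / real n - x) ^ 4 * Bernstein n k x)
      = (\<Sum>k\<le>n. (real k - real n * x) ^ 4 * Bernstein n k x) / real n ^ 4"
    by (simp only: of_nat_divide_diff_eq[OF assms(1)] power_divide sum_divide_distrib times_divide_eq_left)
  also have "\<dots> = real n * q * (1 + 3 * (real n - 2) * q) / real n ^ 4"
    by (simp only: sum_central_moments_Bernstein q_def mult.assoc)
  also have "\<dots> \<le> real n * q * real n / real n ^ 4"
    using bound by (simp add: divide_right_mono)
  also have "\<dots> = x * (1 - x) / real n ^ 2"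
    using assms(1) unfolding q_def by (simp add: power_eq_if)
  finally show ?thesis .
qed

lemma sum_abs_deviation_cube_Bernstein_le:
  assumes "n > 0" and x: "0 \<le> x" "x \<le> 1"
  shows "(\<Sum>k\<le>n. \<bar>real k / real n - x\<bar> ^ 3 * Bernstein n k x) \<le> x * (1 - x) / real n / sqrt (real n)"
proof -
  define l where "l = 1 / sqrt (real n)"
  have l0: "l > 0"
    using assms(1) by (simp add: l_def)
  have am_gm: "\<bar>r\<bar> ^ 3 \<le> (l * r ^ 2 + r ^ 4 / l) / 2" for r :: real
  proof -
    have "0 \<le> r ^ 2 * (l - \<bar>r\<bar>) ^ 2"
      by simp
    then have "2 * l * \<bar>r\<bar> ^ 3 \<le> l ^ 2 * r ^ 2 + r ^ 4"
      by (simp add: algebra_simps power2_eq_square power3_eq_cube power4_eq_xxxx abs_mult_self_eq)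
    then show ?thesis
      using l0 by (simp add: field_simps power2_eq_square)
  qed
  let ?d = "\<lambda>k. real k / real n - x"
  have "(\<Sum>k\<le>n. \<bar>?d k\<bar> ^ 3 * Bernstein n k x)
      \<le> (\<Sum>k\<le>n. (l * ?d k ^ 2 + ?d k ^ 4 / l) / 2 * Bernstein n k x)"
    by (intro sum_mono mult_right_mono am_gm Bernstein_nonneg x)
  also have "\<dots> = l / 2 * (\<Sum>k\<le>n. ?d k ^ 2 * Bernstein n k x)
      + 1 / (2 * l) * (\<Sum>k\<le>n. ?d k ^ 4 * Bernstein n k x)"
    by (simp add: sum_distrib_left sum.distrib add_divide_distrib algebra_simps)
  also have "\<dots> \<le> l / 2 * (x * (1 - x) / real n) + 1 / (2 * l) * (x * (1 - x) / real n ^ 2)"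
    unfolding sum_deviation_square_Bernstein[OF assms(1)]
    using sum_deviation_power4_Bernstein_le[OF assms] l0 by (intro add_left_mono mult_left_mono) auto
  also have "\<dots> = x * (1 - x) / real n / sqrt (real n)"
  proof -
    define s where "s = sqrt (real n)"
    have "s > 0" "real n = s * s"
      using assms(1) by (simp_all add: s_def)
    then show ?thesis
      unfolding l_def s_def[symmetric] by (simp add: field_simps power2_eq_square)
  qed
  finally show ?thesis .
qed

lemma convex_flat_left_imp_nonneg:
  fixes F F' F'' :: "real \<Rightarrow> real"
  assumes "a \<le> b" and "continuous_on {a..b} F" and "continuous_on {a..b} F'"
    and "\<And>s. a < s \<Longrightarrow> s < b \<Longrightarrow> (F has_real_derivative F' s) (at s)"
    and "\<And>s. a < s \<Longrightarrow> s < b \<Longrightarrow> (F' has_real_derivative F'' s) (at s)"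
    and "\<And>s. a < s \<Longrightarrow> s < b \<Longrightarrow> F'' s \<ge> 0"
    and "F a = 0" and "F' a = 0"
  shows "F b \<ge> 0"
proof -
  have F'_nonneg: "F' s \<ge> 0" if "a \<le> s" "s \<le> b" for s
  proof -
    have "F' a \<le> F' s"
      by (rule DERIV_nonneg_imp_increasing_open[OF \<open>a \<le> s\<close>])
        (use assms(5,6) that in force, rule continuous_on_subset[OF assms(3)], use that in auto)
    then show ?thesis
      using assms(8) by simp
  qed
  have "F a \<le> F b"
    by (rule DERIV_nonneg_imp_increasing_open[OF assms(1)]) (use assms(4) F'_nonneg in force, fact)
  then show ?thesis
    using assms(7) by simp
qed

lemma convex_flat_right_imp_nonneg:
  fixes F F' F'' :: "real \<Rightarrow> real"
  assumes "a \<le> b" and "continuous_on {a..b} F" and "continuous_on {a..b} F'"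
    and "\<And>s. a < s \<Longrightarrow> s < b \<Longrightarrow> (F has_real_derivative F' s) (at s)"
    and "\<And>s. a < s \<Longrightarrow> s < b \<Longrightarrow> (F' has_real_derivative F'' s) (at s)"
    and "\<And>s. a < s \<Longrightarrow> s < b \<Longrightarrow> F'' s \<ge> 0"
    and "F b = 0" and "F' b = 0"
  shows "F a \<ge> 0"
proof -
  have F'_nonpos: "F' s \<le> 0" if "a \<le> s" "s \<le> b" for s
  proof -
    have "F' s \<le> F' b"
      by (rule DERIV_nonneg_imp_increasing_open[OF \<open>s \<le> b\<close>])
        (use assms(5,6) that in force, rule continuous_on_subset[OF assms(3)], use that in auto)
    then show ?thesis
      using assms(8) by simp
  qed
  have "- F a \<le> - F b"
    by (rule DERIV_nonneg_imp_increasing_open[where f = "\<lambda>s. - F s", OF assms(1)])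
      (use assms(4) F'_nonpos in \<open>force intro: DERIV_minus\<close>, intro continuous_intros assms(2))
  then show ?thesis
    using assms(7) by simp
qed

(* The remainder is compared with the cubic \<alpha> (s - x)^2/2 + \<beta> |s - x|^3/6: the difference
   vanishes to first order at x and has nonnegative second derivative on either side of x. *)

lemma taylor_second_order_bound:
  fixes h h' h'' :: "real \<Rightarrow> real"
  assumes D1: "\<And>y. y \<in> {a..b} \<Longrightarrow> (h has_real_derivative h' y) (at y within {a..b})"
    and D2: "\<And>y. y \<in> {a..b} \<Longrightarrow> (h' has_real_derivative h'' y) (at y within {a..b})"
    and x: "x \<in> {a..b}" and t: "t \<in> {a..b}"
    and bound: "\<And>u. u \<in> {a..b} \<Longrightarrow> \<bar>h'' u - c\<bar> \<le> \<alpha> + \<beta> * \<bar>u - x\<bar>"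
  shows "\<bar>h t - h x - h' x * (t - x) - c * (t - x) ^ 2 / 2\<bar> \<le> \<alpha> * (t - x) ^ 2 / 2 + \<beta> * \<bar>t - x\<bar> ^ 3 / 6"
proof -
  have cont: "continuous_on {a..b} h" "continuous_on {a..b} h'"
    using DERIV_continuous_on D1 D2 by blast+
  have D1_open: "(h has_real_derivative h' s) (at s)" if "a < s" "s < b" for s
    using D1[of s] that by (simp add: at_within_Icc_at)
  have D2_open: "(h' has_real_derivative h'' s) (at s)" if "a < s" "s < b" for s
    using D2[of s] that by (simp add: at_within_Icc_at)
  have signed: "\<sigma> * (h'' s - c) \<le> \<alpha> + \<beta> * \<bar>s - x\<bar>" if "\<bar>\<sigma>\<bar> = 1" "s \<in> {a..b}" for \<sigma> s
    using bound[OF that(2)] abs_ge_self[of "\<sigma> * (h'' s - c)"] that(1) by (simp add: abs_mult)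
  let ?G = "\<lambda>s. h s - h x - h' x * (s - x) - c * (s - x) ^ 2 / 2"
  have "\<sigma> * ?G t \<le> \<alpha> * (t - x) ^ 2 / 2 + \<beta> * \<bar>t - x\<bar> ^ 3 / 6" if \<sigma>: "\<bar>\<sigma>\<bar> = 1" for \<sigma> :: real
  proof (cases "x \<le> t")
    case True
    have sub: "{x..t} \<subseteq> {a..b}"
      using x t by auto
    have "0 \<le> \<alpha> * (t - x) ^ 2 / 2 + \<beta> * (t - x) ^ 3 / 6 - \<sigma> * ?G t"
    proof (rule convex_flat_left_imp_nonneg[where F' = "\<lambda>s. \<alpha> * (s - x) + \<beta> * (s - x) ^ 2 / 2
        - \<sigma> * (h' s - h' x - c * (s - x))" and F'' = "\<lambda>s. \<alpha> + \<beta> * (s - x) - \<sigma> * (h'' s - c)", OF True])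
      fix s assume s: "x < s" "s < t"
      then have "a < s" "s < b"
        using x t by auto
      then show "((\<lambda>s. \<alpha> * (s - x) ^ 2 / 2 + \<beta> * (s - x) ^ 3 / 6 - \<sigma> * ?G s) has_real_derivative
          \<alpha> * (s - x) + \<beta> * (s - x) ^ 2 / 2 - \<sigma> * (h' s - h' x - c * (s - x))) (at s)"
        and "((\<lambda>s. \<alpha> * (s - x) + \<beta> * (s - x) ^ 2 / 2 - \<sigma> * (h' s - h' x - c * (s - x)))
          has_real_derivative \<alpha> + \<beta> * (s - x) - \<sigma> * (h'' s - c)) (at s)"
        using D1_open D2_open
        by (auto intro!: derivative_eq_intros simp: power2_eq_square field_simps)
      show "0 \<le> \<alpha> + \<beta> * (s - x) - \<sigma> * (h'' s - c)"
        using signed[OF \<sigma>, of s] s x t by simp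
    qed (intro continuous_intros continuous_on_subset[OF _ sub] cont | simp)+
    then show ?thesis
      using True by simp
  next
    case False
    then have tx: "t \<le> x"
      by simp
    have sub: "{t..x} \<subseteq> {a..b}"
      using x t by auto
    have "0 \<le> \<alpha> * (x - t) ^ 2 / 2 + \<beta> * (x - t) ^ 3 / 6 - \<sigma> * ?G t"
    proof (rule convex_flat_right_imp_nonneg[where F' = "\<lambda>s. - \<alpha> * (x - s) - \<beta> * (x - s) ^ 2 / 2
        - \<sigma> * (h' s - h' x - c * (s - x))" and F'' = "\<lambda>s. \<alpha> + \<beta> * (x - s) - \<sigma> * (h'' s - c)", OF tx])
      fix s assume s: "t < s" "s < x"
      then have "a < s" "s < b"
        using x t by auto
      then show "((\<lambda>s. \<alpha> * (x - s) ^ 2 / 2 + \<beta> * (x - s) ^ 3 / 6 - \<sigma> * ?G s) has_real_derivative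
          - \<alpha> * (x - s) - \<beta> * (x - s) ^ 2 / 2 - \<sigma> * (h' s - h' x - c * (s - x))) (at s)"
        and "((\<lambda>s. - \<alpha> * (x - s) - \<beta> * (x - s) ^ 2 / 2 - \<sigma> * (h' s - h' x - c * (s - x)))
          has_real_derivative \<alpha> + \<beta> * (x - s) - \<sigma> * (h'' s - c)) (at s)"
        using D1_open D2_open
        by (auto intro!: derivative_eq_intros simp: power2_eq_square field_simps)
      show "0 \<le> \<alpha> + \<beta> * (x - s) - \<sigma> * (h'' s - c)"
        using signed[OF \<sigma>, of s] s x t by simp
    qed (intro continuous_intros continuous_on_subset[OF _ sub] cont | simp)+
    moreover have "\<bar>t - x\<bar> ^ 3 = (x - t) ^ 3" "(t - x) ^ 2 = (x - t) ^ 2"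
      using tx by (simp_all add: power2_commute)
    ultimately show ?thesis
      by simp
  qed
  from this[of 1] this[of "-1"] show ?thesis
    by (simp add: abs_le_iff)
qed

lemma bernstein_eq_sum_Bernstein:
  "bernstein n f x = (\<Sum>k\<le>n. f (real k / real n) * Bernstein n k x)"
  unfolding bernstein_def Bernstein_def atLeast0AtMost by (simp add: mult_ac)

lemma bernstein_error_le_of_taylor_bound:
  assumes "n > 0" and x: "0 \<le> x" "x \<le> 1" and "\<beta> \<ge> 0"
    and taylor: "\<And>k. k \<le> n \<Longrightarrow>
      \<bar>h (real k / real n) - h x - a * (real k / real n - x) - c * (real k / real n - x) ^ 2 / 2\<bar>
        \<le> \<alpha> * (real k / real n - x) ^ 2 / 2 + \<beta> * \<bar>real k / real n - x\<bar> ^ 3 / 6"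
  shows "\<bar>bernstein n h x - h x - c * (x * (1 - x) / real n) / 2\<bar>
          \<le> \<alpha> * (x * (1 - x) / real n) / 2 + \<beta> * (x * (1 - x) / real n / sqrt (real n)) / 6"
proof -
  let ?d = "\<lambda>k. real k / real n - x" and ?B = "\<lambda>k. Bernstein n k x"
  let ?G = "\<lambda>k. h (real k / real n) - h x - a * ?d k - c * ?d k ^ 2 / 2"
  have "(\<Sum>k\<le>n. ?G k * ?B k) = (\<Sum>k\<le>n. h (real k / real n) * ?B k) - h x * (\<Sum>k\<le>n. ?B k)
      - a * (\<Sum>k\<le>n. ?d k * ?B k) - c / 2 * (\<Sum>k\<le>n. ?d k ^ 2 * ?B k)"
  proof -
    have "?G k * ?B k = h (real k / real n) * ?B k - h x * ?B k - a * (?d k * ?B k) - c / 2 * (?d k ^ 2 * ?B k)"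
      for k
      by (simp add: algebra_simps)
    then show ?thesis
      by (simp only: sum_subtractf sum_distrib_left)
  qed
  also have "\<dots> = bernstein n h x - h x - c * (x * (1 - x) / real n) / 2"
    by (simp add: bernstein_eq_sum_Bernstein sum_deviation_Bernstein sum_deviation_square_Bernstein assms(1))
  finally have "\<bar>bernstein n h x - h x - c * (x * (1 - x) / real n) / 2\<bar> = \<bar>\<Sum>k\<le>n. ?G k * ?B k\<bar>"
    by simp
  also have "\<dots> \<le> (\<Sum>k\<le>n. \<bar>?G k\<bar> * ?B k)"
    by (rule order_trans[OF sum_abs]) (simp add: abs_mult Bernstein_nonneg x)
  also have "\<dots> \<le> (\<Sum>k\<le>n. (\<alpha> * ?d k ^ 2 / 2 + \<beta> * \<bar>?d k\<bar> ^ 3 / 6) * ?B k)"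
    by (intro sum_mono mult_right_mono taylor) (simp_all add: Bernstein_nonneg x)
  also have "\<dots> = \<alpha> / 2 * (\<Sum>k\<le>n. ?d k ^ 2 * ?B k) + \<beta> / 6 * (\<Sum>k\<le>n. \<bar>?d k\<bar> ^ 3 * ?B k)"
    by (simp add: sum_distrib_left sum.distrib algebra_simps)
  also have "\<dots> \<le> \<alpha> / 2 * (x * (1 - x) / real n) + \<beta> / 6 * (x * (1 - x) / real n / sqrt (real n))"
    unfolding sum_deviation_square_Bernstein[OF assms(1)]
    using sum_abs_deviation_cube_Bernstein_le[OF assms(1) x] \<open>\<beta> \<ge> 0\<close>
    by (intro add_left_mono mult_left_mono) auto
  finally show ?thesis
    by simp
qed

lemma bdd_above_abs_image_01:
  fixes h :: "real \<Rightarrow> real"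
  assumes "continuous_on {0..1} h"
  shows "bdd_above {\<bar>h x\<bar> | x. x \<in> {0..1}}"
proof -
  have "bounded (h ` {0..1})"
    using compact_continuous_image compact_imp_bounded assms by blast
  then show ?thesis
    by (force simp: bounded_iff bdd_above_def)
qed

lemma abs_le_unorm:
  assumes "continuous_on {0..1} h" and "y \<in> {0..1}"
  shows "\<bar>h y\<bar> \<le> unorm h"
  unfolding unorm_def by (rule cSup_upper[OF _ bdd_above_abs_image_01[OF assms(1)]]) (use assms(2) in blast)

lemma unorm_nonneg:
  assumes "continuous_on {0..1} h"
  shows "unorm h \<ge> 0"
  using abs_le_unorm[OF assms, of 0] by simp

lemma abs_diff_le_twice_unorm:
  assumes "continuous_on {0..1} h" and "u \<in> {0..1}" "y \<in> {0..1}"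
  shows "\<bar>h u - h y\<bar> \<le> 2 * unorm h"
  using abs_le_unorm[OF assms(1,2)] abs_le_unorm[OF assms(1,3)] by linarith

lemma abs_diff_le_omega1:
  assumes "continuous_on {0..1} h" and "u \<in> {0..1}" "y \<in> {0..1}" and "\<bar>u - y\<bar> \<le> s"
  shows "\<bar>h u - h y\<bar> \<le> omega1 h s"
  unfolding omega1_def
proof (rule cSup_upper)
  show "bdd_above {\<bar>h x - h y\<bar> | x y. x \<in> {0..1} \<and> y \<in> {0..1} \<and> \<bar>x - y\<bar> \<le> s}"
    by (rule bdd_aboveI[where M = "2 * unorm h"]) (auto intro: abs_diff_le_twice_unorm[OF assms(1)])
qed (use assms(2-4) in blast)

lemma omega1_nonneg:
  assumes "continuous_on {0..1} h" and "s \<ge> 0"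
  shows "omega1 h s \<ge> 0"
  using abs_diff_le_omega1[OF assms(1), of 0 0 s] assms(2) by simp

lemma omega1_le_twice_unorm:
  assumes "continuous_on {0..1} h" and "s \<ge> 0"
  shows "omega1 h s \<le> 2 * unorm h"
  unfolding omega1_def
  by (rule cSup_least) (use assms in \<open>force, auto intro: abs_diff_le_twice_unorm[OF assms(1)]\<close>)

lemma concave_on_supporting_line:
  fixes \<psi> :: "real \<Rightarrow> real"
  assumes "concave_on {0..} \<psi>" and nonneg: "\<And>s. s \<ge> 0 \<Longrightarrow> \<psi> s \<ge> 0" and "a > 0"
  obtains m where "m \<ge> 0" and "\<And>r. r \<ge> 0 \<Longrightarrow> \<psi> r \<le> \<psi> a + m * (r - a)"
proof -
  have convex: "convex_on {0..} (\<lambda>s. - \<psi> s)"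
    using assms(1) by (simp add: concave_on_def)
  have slope: "(\<psi> s - \<psi> a) / (s - a) \<le> (\<psi> a - \<psi> r) / (a - r)" if "0 \<le> r" "r < a" "a < s" for r s
  proof -
    have "((- \<psi> r) - (- \<psi> a)) / (r - a) \<le> ((- \<psi> a) - (- \<psi> s)) / (a - s)"
      using convex_on_slope_le[OF convex, of r s a] that by (auto intro: order_trans)
    then show ?thesis
      using that by (simp add: field_simps)
  qed
  define L where "L = {(\<psi> a - \<psi> r) / (a - r) | r. 0 \<le> r \<and> r < a}"
  define m where "m = Inf L"
  have "L \<noteq> {}"
    using assms(3) unfolding L_def by force
  have "bdd_below L"
  proof (rule bdd_belowI[where m = "\<psi> (a + 1) - \<psi> a"])
    fix z assume "z \<in> L"
    then obtain r where "0 \<le> r" "r < a" "z = (\<psi> a - \<psi> r) / (a - r)"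
      unfolding L_def by blast
    then show "\<psi> (a + 1) - \<psi> a \<le> z"
      using slope[of r "a + 1"] by simp
  qed
  have line: "\<psi> r \<le> \<psi> a + m * (r - a)" if "r \<ge> 0" for r
  proof (cases r a rule: linorder_cases)
    case less
    have "m \<le> (\<psi> a - \<psi> r) / (a - r)"
      unfolding m_def by (rule cInf_lower[OF _ \<open>bdd_below L\<close>]) (use that less in \<open>auto simp: L_def\<close>)
    then show ?thesis
      using less by (simp add: le_divide_eq algebra_simps)
  next
    case equal
    then show ?thesis
      by simp
  next
    case greater
    have "(\<psi> r - \<psi> a) / (r - a) \<le> m"
      unfolding m_def by (rule cInf_greatest[OF \<open>L \<noteq> {}\<close>]) (use greater slope in \<open>auto simp: L_def\<close>)
    then show ?thesis
      using greater by (simp add: divide_le_eq algebra_simps)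
  qed
  have "m \<ge> 0"
  proof (rule ccontr)
    assume "\<not> m \<ge> 0"
    define r where "r = a + (\<psi> a + 1) / (- m)"
    have "(\<psi> a + 1) / (- m) \<ge> 0"
      using \<open>\<not> m \<ge> 0\<close> nonneg[of a] assms(3) by (simp add: divide_nonneg_neg)
    then have "r \<ge> 0"
      using assms(3) unfolding r_def by linarith
    have "\<psi> a + m * (r - a) = -1"
      using \<open>\<not> m \<ge> 0\<close> unfolding r_def by (simp add: field_simps)
    then show False
      using line[OF \<open>r \<ge> 0\<close>] nonneg[OF \<open>r \<ge> 0\<close>] by simp
  qed
  with line show ?thesis
    using that by blast
qed


lemma d01_eqI:
  assumes "y \<in> {0..1}" and "(h has_real_derivative v) (at y within {0..1})"
  shows "d01 h y = v"
proof -
  have "(h has_vector_derivative v) (at y within cbox 0 1)"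
    using assms(2) by (simp add: cbox_interval has_real_derivative_iff_has_vector_derivative)
  from vector_derivative_within_cbox[OF _ _ this] assms(1) show ?thesis
    by (simp add: d01_def cbox_interval)
qed

lemma C2_01_has_derivatives:
  assumes "C2_01 h"
  shows "\<And>y. y \<in> {0..1} \<Longrightarrow> (h has_real_derivative d01 h y) (at y within {0..1})"
    and "\<And>y. y \<in> {0..1} \<Longrightarrow> (d01 h has_real_derivative d01 (d01 h) y) (at y within {0..1})"
    and "continuous_on {0..1} (d01 (d01 h))"
  using assms unfolding C2_01_def d01_def
  by (auto simp: has_real_derivative_iff_has_vector_derivative vector_derivative_works[symmetric])

lemma C2_01I:
  assumes D1: "\<And>y. y \<in> {0..1} \<Longrightarrow> (h has_real_derivative h' y) (at y within {0..1})"
    and D2: "\<And>y. y \<in> {0..1} \<Longrightarrow> (h' has_real_derivative h'' y) (at y within {0..1})"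
    and "continuous_on {0..1} h''"
  shows "C2_01 h" and "\<And>y. y \<in> {0..1} \<Longrightarrow> d01 (d01 h) y = h'' y"
proof -
  have d1: "d01 h y = h' y" if "y \<in> {0..1}" for y
    using d01_eqI[OF that D1[OF that]] .
  have D2': "(d01 h has_real_derivative h'' y) (at y within {0..1})" if "y \<in> {0..1}" for y
    by (rule has_field_derivative_transform_within[OF D2[OF that] zero_less_one that]) (simp add: d1)
  show d2: "d01 (d01 h) y = h'' y" if "y \<in> {0..1}" for y
    using d01_eqI[OF that D2'[OF that]] .
  have "continuous_on {0..1} (d01 (d01 h))"
    by (rule continuous_on_eq[OF assms(3)]) (simp add: d2)
  with D1 D2' show "C2_01 h"
    unfolding C2_01_def real_differentiable_def by blast
qed

lemma C2_01_mult:
  assumes "C2_01 f" and "C2_01 g"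
  shows "C2_01 (\<lambda>t. f t * g t)"
    and "\<And>y. y \<in> {0..1} \<Longrightarrow> d01 (d01 (\<lambda>t. f t * g t)) y
           = d01 (d01 f) y * g y + 2 * (d01 f y * d01 g y) + f y * d01 (d01 g) y"
proof -
  note f = C2_01_has_derivatives[OF assms(1)] and g = C2_01_has_derivatives[OF assms(2)]
  have D1: "((\<lambda>t. f t * g t) has_real_derivative d01 f y * g y + f y * d01 g y) (at y within {0..1})"
    if "y \<in> {0..1}" for y
    using DERIV_mult[OF f(1)[OF that] g(1)[OF that]] by (simp add: mult_ac)
  have D2: "((\<lambda>y. d01 f y * g y + f y * d01 g y) has_real_derivative
      d01 (d01 f) y * g y + 2 * (d01 f y * d01 g y) + f y * d01 (d01 g) y) (at y within {0..1})"
    if "y \<in> {0..1}" for y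
    using DERIV_add[OF DERIV_mult[OF f(2)[OF that] g(1)[OF that]] DERIV_mult[OF f(1)[OF that] g(2)[OF that]]]
    by (simp add: algebra_simps)
  have "continuous_on {0..1} f" "continuous_on {0..1} (d01 f)"
    "continuous_on {0..1} g" "continuous_on {0..1} (d01 g)"
    using DERIV_continuous_on f(1,2) g(1,2) by blast+
  then have "continuous_on {0..1} (\<lambda>y. d01 (d01 f) y * g y + 2 * (d01 f y * d01 g y) + f y * d01 (d01 g) y)"
    by (intro continuous_intros f(3) g(3))
  from C2_01I[OF D1 D2 this] show "C2_01 (\<lambda>t. f t * g t)"
    and "\<And>y. y \<in> {0..1} \<Longrightarrow> d01 (d01 (\<lambda>t. f t * g t)) y
           = d01 (d01 f) y * g y + 2 * (d01 f y * d01 g y) + f y * d01 (d01 g) y"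
    by blast+
qed

definition voronovskaja_error :: "nat \<Rightarrow> (real \<Rightarrow> real) \<Rightarrow> real \<Rightarrow> real" where
  "voronovskaja_error n h x = bernstein n h x - h x - x * (1 - x) / (2 * real n) * d01 (d01 h) x"

lemma voronovskaja_error_le_concave_majorant:
  assumes "C2_01 h" and "concave_on {0..} \<psi>" and majorant: "\<And>s. s \<ge> 0 \<Longrightarrow> omega1 (d01 (d01 h)) s \<le> \<psi> s"
    and x: "x \<in> {0..1}" and "n > 0"
  shows "real n * \<bar>voronovskaja_error n h x\<bar>
           \<le> x * (1 - x) / 2 * \<psi> (1 / (3 * sqrt (real n)))"
proof -
  note h = C2_01_has_derivatives[OF assms(1)]
  define \<delta> where "\<delta> = 1 / (3 * sqrt (real n))"
  have "\<delta> > 0"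
    using \<open>n > 0\<close> by (simp add: \<delta>_def)
  have "\<psi> s \<ge> 0" if "s \<ge> 0" for s
    using omega1_nonneg[OF h(3) that] majorant[OF that] by linarith
  then obtain m where "m \<ge> 0" and line: "\<And>r. r \<ge> 0 \<Longrightarrow> \<psi> r \<le> \<psi> \<delta> + m * (r - \<delta>)"
    using concave_on_supporting_line[OF assms(2) _ \<open>\<delta> > 0\<close>] by blast
  have second_derivative: "\<bar>d01 (d01 h) u - d01 (d01 h) x\<bar> \<le> (\<psi> \<delta> - m * \<delta>) + m * \<bar>u - x\<bar>"
    if "u \<in> {0..1}" for u
  proof -
    have "\<bar>d01 (d01 h) u - d01 (d01 h) x\<bar> \<le> \<psi> \<bar>u - x\<bar>"
      using abs_diff_le_omega1[OF h(3) that x order_refl] majorant[of "\<bar>u - x\<bar>"] by simp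
    also have "\<dots> \<le> \<psi> \<delta> + m * (\<bar>u - x\<bar> - \<delta>)"
      by (rule line) simp
    finally show ?thesis
      by (simp add: algebra_simps)
  qed
  have "\<bar>bernstein n h x - h x - d01 (d01 h) x * (x * (1 - x) / real n) / 2\<bar>
      \<le> (\<psi> \<delta> - m * \<delta>) * (x * (1 - x) / real n) / 2 + m * (x * (1 - x) / real n / sqrt (real n)) / 6"
    using x \<open>n > 0\<close>
    by (intro bernstein_error_le_of_taylor_bound[where a = "d01 h x"] \<open>m \<ge> 0\<close> taylor_second_order_bound[OF h(1,2) x]
        second_derivative) (auto simp: divide_le_eq_1)
  also have "\<dots> = \<psi> \<delta> * (x * (1 - x) / real n) / 2"
    using \<open>n > 0\<close> by (simp add: \<delta>_def field_simps)
  finally show ?thesis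
    using \<open>n > 0\<close> by (simp add: voronovskaja_error_def \<delta>_def field_simps)
qed

lemma le_mult_Inf:
  fixes S :: "real set"
  assumes "S \<noteq> {}" and "c \<ge> 0" and "\<And>s. s \<in> S \<Longrightarrow> a \<le> c * s"
  shows "a \<le> c * Inf S"
proof (cases "c = 0")
  case True
  then show ?thesis
    using assms(1,3) by auto
next
  case False
  then have "a / c \<le> Inf S"
    using assms by (intro cInf_greatest) (auto simp: divide_le_eq mult.commute)
  then show ?thesis
    using False assms(2) by (simp add: divide_le_eq mult.commute)
qed

lemma voronovskaja_error_le_omega1_tilde:
  assumes "C2_01 h" and "x \<in> {0..1}" and "n > 0"
  shows "real n * \<bar>voronovskaja_error n h x\<bar>
           \<le> x * (1 - x) / 2 * omega1_tilde (d01 (d01 h)) (1 / (3 * sqrt (real n)))"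
  unfolding omega1_tilde_def
proof (rule le_mult_Inf)
  note h'' = C2_01_has_derivatives(3)[OF assms(1)]
  have "concave_on {0..} (\<lambda>_::real. 2 * unorm (d01 (d01 h)))"
    by (simp add: concave_on_def convex_on_const convex_real_interval)
  then show "{\<psi> (1 / (3 * sqrt (real n))) | \<psi>.
      concave_on {0..} \<psi> \<and> (\<forall>s\<ge>0. omega1 (d01 (d01 h)) s \<le> \<psi> s)} \<noteq> {}"
    using omega1_le_twice_unorm[OF h''] by blast
  show "0 \<le> x * (1 - x) / 2"
    using assms(2) by simp
qed (use voronovskaja_error_le_concave_majorant[OF assms(1) _ _ assms(2,3)] in blast)

lemma bernstein_error_le_unorm:
  assumes "C2_01 h" and x: "x \<in> {0..1}" and "n > 0"
  shows "\<bar>bernstein n h x - h x\<bar> \<le> x * (1 - x) / (2 * real n) * unorm (d01 (d01 h))"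
proof -
  note h = C2_01_has_derivatives[OF assms(1)]
  have "\<bar>d01 (d01 h) u - 0\<bar> \<le> unorm (d01 (d01 h)) + 0 * \<bar>u - x\<bar>" if "u \<in> {0..1}" for u
    using abs_le_unorm[OF h(3) that] by simp
  then have "\<bar>bernstein n h x - h x - 0 * (x * (1 - x) / real n) / 2\<bar>
      \<le> unorm (d01 (d01 h)) * (x * (1 - x) / real n) / 2 + 0 * (x * (1 - x) / real n / sqrt (real n)) / 6"
    using x \<open>n > 0\<close>
    by (intro bernstein_error_le_of_taylor_bound[where a = "d01 h x"] taylor_second_order_bound[OF h(1,2) x])
      (auto simp: divide_le_eq_1)
  then show ?thesis
    by (simp add: mult_ac)
qed

lemma bernstein_error_product_le:
  assumes "C2_01 f" and "C2_01 g" and x: "x \<in> {0..1}" and "n > 0"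
  shows "real n * (\<bar>bernstein n f x - f x\<bar> * \<bar>bernstein n g x - g x\<bar>)
           \<le> x * (1 - x) / 2 * (1 / (2 * real n) * unorm (d01 (d01 f)) * unorm (d01 (d01 g)))"
proof -
  define X where "X = x * (1 - x)"
  have "0 \<le> X" "X \<le> 1"
    using x unfolding X_def by (auto intro: mult_le_one)
  define U V where "U = unorm (d01 (d01 f))" and "V = unorm (d01 (d01 g))"
  have "0 \<le> U" "0 \<le> V"
    unfolding U_def V_def using unorm_nonneg C2_01_has_derivatives(3) assms(1,2) by blast+
  have "real n * (\<bar>bernstein n f x - f x\<bar> * \<bar>bernstein n g x - g x\<bar>)
      \<le> real n * ((X / (2 * real n) * U) * (X / (2 * real n) * V))"
    using bernstein_error_le_unorm[OF assms(1) x \<open>n > 0\<close>] bernstein_error_le_unorm[OF assms(2) x \<open>n > 0\<close>]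
      \<open>0 \<le> X\<close> \<open>0 \<le> U\<close> \<open>n > 0\<close> unfolding X_def U_def V_def
    by (intro mult_left_mono mult_mono) auto
  also have "\<dots> = X * X * (U * V) / (4 * real n)"
    using \<open>n > 0\<close> by (simp add: field_simps)
  also have "\<dots> \<le> X * (U * V) / (4 * real n)"
    using \<open>0 \<le> X\<close> \<open>X \<le> 1\<close> \<open>0 \<le> U\<close> \<open>0 \<le> V\<close>
    by (intro divide_right_mono mult_right_mono) (auto intro: mult_left_le_one_le)
  also have "\<dots> = x * (1 - x) / 2 * (1 / (2 * real n) * U * V)"
    unfolding X_def by (simp add: field_simps)
  finally show ?thesis
    unfolding U_def V_def .
qed

lemma abs_bernstein_mult_error_le:
  assumes "C2_01 f" and "C2_01 g" and x: "x \<in> {0..1}" and "n > 0"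
  shows "\<bar>bernstein n (\<lambda>t. f t * g t) x - bernstein n f x * bernstein n g x
            - x * (1 - x) / real n * d01 f x * d01 g x\<bar>
         \<le> \<bar>voronovskaja_error n (\<lambda>t. f t * g t) x\<bar> + \<bar>f x\<bar> * \<bar>voronovskaja_error n g x\<bar>
           + \<bar>g x\<bar> * \<bar>voronovskaja_error n f x\<bar> + \<bar>bernstein n f x - f x\<bar> * \<bar>bernstein n g x - g x\<bar>"
proof -
  have "bernstein n (\<lambda>t. f t * g t) x - bernstein n f x * bernstein n g x
            - x * (1 - x) / real n * d01 f x * d01 g x
      = voronovskaja_error n (\<lambda>t. f t * g t) x - f x * voronovskaja_error n g x
          - g x * voronovskaja_error n f x - (bernstein n f x - f x) * (bernstein n g x - g x)"
    unfolding voronovskaja_error_def C2_01_mult(2)[OF assms(1,2) x] using \<open>n > 0\<close>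
    by (simp add: field_simps)
  then show ?thesis
    by (simp add: abs_mult[symmetric])
qed

theorem theorem2p1:
  fixes f g :: "real \<Rightarrow> real" and x :: real and n :: nat
  assumes "C2_01 f" and "C2_01 g" and "x \<in> {0..1}" and "n \<ge> 1"
  shows "real n * \<bar>bernstein n (\<lambda>t. f t * g t) x - bernstein n f x * bernstein n g x
            - x * (1 - x) / real n * d01 f x * d01 g x\<bar>
         \<le> x * (1 - x) / 2 *
           (omega1_tilde (d01 (d01 (\<lambda>t. f t * g t))) (1 / (3 * sqrt (real n)))
            + unorm g * omega1_tilde (d01 (d01 f)) (1 / (3 * sqrt (real n)))
            + unorm f * omega1_tilde (d01 (d01 g)) (1 / (3 * sqrt (real n)))
            + 1 / (2 * real n) * unorm (d01 (d01 f)) * unorm (d01 (d01 g)))"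
proof -
  have x: "x \<in> {0..1}" and n: "n > 0"
    using assms(3,4) by auto
  have "\<bar>f x\<bar> \<le> unorm f" "\<bar>g x\<bar> \<le> unorm g"
    using abs_le_unorm x DERIV_continuous_on C2_01_has_derivatives(1) assms(1,2) by metis+
  have "real n * \<bar>bernstein n (\<lambda>t. f t * g t) x - bernstein n f x * bernstein n g x
            - x * (1 - x) / real n * d01 f x * d01 g x\<bar>
      \<le> real n * \<bar>voronovskaja_error n (\<lambda>t. f t * g t) x\<bar> + \<bar>f x\<bar> * (real n * \<bar>voronovskaja_error n g x\<bar>)
        + \<bar>g x\<bar> * (real n * \<bar>voronovskaja_error n f x\<bar>)
        + real n * (\<bar>bernstein n f x - f x\<bar> * \<bar>bernstein n g x - g x\<bar>)"
    using mult_left_mono[OF abs_bernstein_mult_error_le[OF assms(1,2) x n], of "real n"]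
    by (simp add: algebra_simps)
  also have "\<dots> \<le> x * (1 - x) / 2 * omega1_tilde (d01 (d01 (\<lambda>t. f t * g t))) (1 / (3 * sqrt (real n)))
        + unorm f * (x * (1 - x) / 2 * omega1_tilde (d01 (d01 g)) (1 / (3 * sqrt (real n))))
        + unorm g * (x * (1 - x) / 2 * omega1_tilde (d01 (d01 f)) (1 / (3 * sqrt (real n))))
        + x * (1 - x) / 2 * (1 / (2 * real n) * unorm (d01 (d01 f)) * unorm (d01 (d01 g)))"
    by (intro add_mono voronovskaja_error_le_omega1_tilde[OF _ x n] C2_01_mult(1) assms(1,2)
        bernstein_error_product_le[OF assms(1,2) x n] mult_mono' \<open>\<bar>f x\<bar> \<le> unorm f\<close> \<open>\<bar>g x\<bar> \<le> unorm g\<close>)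
      simp_all
  finally show ?thesis
    by (simp add: algebra_simps)
qed

end
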